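(* Let $f:\mathbb{R}^d\to\mathbb{R}$ be convex and $M$-Lipschitz, i.e. $|f(x)-f(y)|\le M\|x-y\|$ for all $x,y$, and suppose $X^*\neq\emptyset$. Run the Proximal Bundle Method with parameter $\beta\in(0,1)$ and constant stepsize $\rho_k=\rho>0$ for all $k$. Let $D^2=\sup_k \mathrm{dist}(x_k,X^* )^2$ and assume $0<D^2<\infty$. Then for any $0<\epsilon\le f(x_0)-f^*$, the number of descent steps taken before the first iterate $x_k$ with $f(x_k)-f^*\le\epsilon$ is found is at most $$\frac{2\rho D^2}{\beta\epsilon}+\left\lceil \frac{2\log\left(\frac{f(x_0)-f^*}{\rho D^2}\right)}{\beta}\right\rceil_+,$$ and the number of null steps taken before then is at most $$\frac{48\rho M^2D^4}{\beta(1-\beta)^2\epsilon^3}+\frac{32M^2}{\beta(1-\beta)^2\rho^2D^2}.$$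
   Context: Throughout, $f:\mathbb{R}^d\to\mathbb{R}$ is a proper closed convex function attaining its minimum $f^*=\inf f$ on the nonempty set $X^*=\{x: f(x)=f^*\}$; $\mathrm{dist}(x,S)=\inf_{y\in S}\|x-y\|$; $\partial f(x)$ is the convex subdifferential; $\lceil a\rceil_+=\max\{\lceil a\rceil,0\}$. A subgradient oracle returns, for any $x$, the value $f(x)$ and some $g(x)\in\partial f(x)$. Proximal Bundle Method: fix $\beta\in(0,1)$, $x_0=z_0\in\mathbb{R}^d$, $g_0=g(x_0)$, and the initial model $f_0(x)=f(x_0)+\langle g_0,x-x_0\rangle$. At iteration $k\ge0$, given a convex model $f_k:\mathbb{R}^d\to\mathbb{R}$ and stepsize $\rho_k>0$, compute $z_{k+1}=\operatorname{argmin}_z f_k(z)+\frac{\rho_k}{2}\|z-x_k\|^2$. If $\beta(f(x_k)-f_k(z_{k+1}))\le f(x_k)-f(z_{k+1})$, iteration $k$ is a descent step and $x_{k+1}=z_{k+1}$; otherwise it is a null step and $x_{k+1}=x_k$. Then a new convex model $f_{k+1}$ and stepsize $\rho_{k+1}$ are chosen satisfying, with $g_{k+1}=g(z_{k+1})$ and $s_{k+1}=\rho_k(x_k-z_{k+1})$: (1) $f_{k+1}(x)\le f(x)$ for all $x$; (2) $f_{k+1}(x)\ge f(z_{k+1})+\langle g_{k+1},x-z_{k+1}\rangle$ for all $x$; (3) if iteration $k$ was a null step, $f_{k+1}(x)\ge f_k(z_{k+1})+\langle s_{k+1},x-z_{k+1}\rangle$ for all $x$; (4) if iteration $k$ was a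 null step, $\rho_{k+1}\ge\rho_k$. An $\epsilon$-minimizer is a point $x$ with $f(x)-f^*\le\epsilon$. *)

theory Defs
  imports "HOL-Analysis.Analysis"
begin

definition subdiff :: "('a::real_inner \<Rightarrow> real) \<Rightarrow> 'a \<Rightarrow> 'a set" where
  "subdiff f x = {s. \<forall>y. f y \<ge> f x + inner s (y - x)}"

definition fstar :: "('a \<Rightarrow> real) \<Rightarrow> real" where
  "fstar f = Inf (range f)"

definition Xstar :: "('a \<Rightarrow> real) \<Rightarrow> 'a set" where
  "Xstar f = {x. f x = fstar f}"

definition is_descent ::
  "('a::real_normed_vector \<Rightarrow> real) \<Rightarrow> real \<Rightarrow> (nat \<Rightarrow> 'a \<Rightarrow> real) \<Rightarrow> (nat \<Rightarrow> 'a) \<Rightarrow> (nat \<Rightarrow> 'a) \<Rightarrow> nat \<Rightarrow> bool" where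
  "is_descent f \<beta> fm x z k \<longleftrightarrow> \<beta> * (f (x k) - fm k (z (Suc k))) \<le> f (x k) - f (z (Suc k))"

text \<open>A run of the Proximal Bundle Method with subgradient map g, parameter \<beta>,
  stepsize sequence \<rho>, proximal centers x, trial points z and models fm.\<close>
definition pbm_run ::
  "('a::real_inner \<Rightarrow> real) \<Rightarrow> ('a \<Rightarrow> 'a) \<Rightarrow> real \<Rightarrow> (nat \<Rightarrow> real) \<Rightarrow>
   (nat \<Rightarrow> 'a) \<Rightarrow> (nat \<Rightarrow> 'a) \<Rightarrow> (nat \<Rightarrow> 'a \<Rightarrow> real) \<Rightarrow> bool" where
  "pbm_run f g \<beta> \<rho> x z fm \<longleftrightarrow>
     z 0 = x 0 \<and>
     fm 0 = (\<lambda>y. f (x 0) + inner (g (x 0)) (y - x 0)) \<and>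
     (\<forall>k. convex_on UNIV (fm k)) \<and>
     (\<forall>k. \<rho> k > 0) \<and>
     (\<forall>k w. fm k (z (Suc k)) + \<rho> k / 2 * (norm (z (Suc k) - x k))\<^sup>2
              \<le> fm k w + \<rho> k / 2 * (norm (w - x k))\<^sup>2) \<and>
     (\<forall>k. x (Suc k) = (if is_descent f \<beta> fm x z k then z (Suc k) else x k)) \<and>
     (\<forall>k y. fm (Suc k) y \<le> f y) \<and>
     (\<forall>k y. fm (Suc k) y \<ge> f (z (Suc k)) + inner (g (z (Suc k))) (y - z (Suc k))) \<and>
     (\<forall>k y. \<not> is_descent f \<beta> fm x z k \<longrightarrow>
        fm (Suc k) y \<ge> fm k (z (Suc k)) + inner (\<rho> k *\<^sub>R (x k - z (Suc k))) (y - z (Suc k))) \<and>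
     (\<forall>k. \<not> is_descent f \<beta> fm x z k \<longrightarrow> \<rho> (Suc k) \<ge> \<rho> k)"

end

theory Submission
  imports Defs
begin

(* With h_k = f(x_k) - f^* and the proximal gap e_k = f(x_k) - min_z (f_k(z) + rho/2 |z - x_k|^2),
   comparing with the point on the segment from x_k to a nearest minimizer gives
   e_k >= t h_k - rho t^2 D^2 / 2 for t in [0,1], so e_k >= h_k / 2 while h_k >= rho D^2 and
   e_k >= h_k^2 / (2 rho D^2) afterwards. A descent step lowers h by beta e_k: far from the optimum h
   contracts by the factor 1 - beta/2, close to it 1/h grows by beta / (2 rho D^2); these two phases
   give the two terms of the descent bound. On a null step the new model dominates a convex
   combination of the aggregate cut and the new cut, which raises the proximal value by at least
   c e_k^2 with c = rho (1 - beta)^2 / (8 M^2). So 1/e grows by c per null step, and the null steps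
   before the last descent step number at most 1/c times the sum of 1/e_d over descent steps d,
   which the two phases bound again. *)

lemma norm_add_power2:
  fixes a b :: "'a::real_inner"
  shows "(norm (a + b))\<^sup>2 = (norm a)\<^sup>2 + 2 * inner a b + (norm b)\<^sup>2"
  using dot_norm[of a b] by simp

lemma inner_plus_half_norm_ge:
  fixes v u :: "'a::real_inner"
  assumes "0 < r"
  shows "- (norm v)\<^sup>2 / (2 * r) \<le> inner v u + r / 2 * (norm u)\<^sup>2"
proof -
  have "0 \<le> (norm (v + r *\<^sub>R u))\<^sup>2" by simp
  also have "\<dots> = (norm v)\<^sup>2 + 2 * r * inner v u + r\<^sup>2 * (norm u)\<^sup>2"
    by (simp add: norm_add_power2 power_mult_distrib)
  finally show ?thesis using assms by (simp add: field_simps power2_eq_square)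
qed

lemma nonneg_if_nonneg_plus_small_multiples:
  fixes A B :: real
  assumes "0 \<le> B" and "\<And>t. 0 < t \<Longrightarrow> t \<le> 1 \<Longrightarrow> 0 \<le> A + t * B"
  shows "0 \<le> A"
proof (rule field_le_epsilon)
  fix e :: real assume "0 < e"
  define t where "t = min 1 (e / (B + 1))"
  have t: "0 < t" "t \<le> 1" using \<open>0 < e\<close> assms(1) by (auto simp: t_def)
  have "t * B \<le> e / (B + 1) * B" using assms(1) by (intro mult_right_mono) (auto simp: t_def)
  also have "\<dots> \<le> e" using \<open>0 < e\<close> assms(1) by (simp add: field_simps)
  finally show "0 \<le> A + e" using assms(2)[OF t] by linarith
qed

lemma prox_point_subgradient:
  fixes \<phi> :: "'a::real_inner \<Rightarrow> real"
  assumes cvx: "convex_on UNIV \<phi>" and r: "0 < r"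
    and opt: "\<And>w. \<phi> p + r / 2 * (norm (p - c))\<^sup>2 \<le> \<phi> w + r / 2 * (norm (w - c))\<^sup>2"
  shows "\<phi> p + inner (r *\<^sub>R (c - p)) (w - p) \<le> \<phi> w"
proof -
  define ip where "ip = inner (p - c) (w - p)"
  let ?A = "\<phi> w - \<phi> p + r * ip"
  let ?B = "r / 2 * (norm (w - p))\<^sup>2"
  have small: "0 \<le> ?A + t * ?B" if t: "0 < t" "t \<le> 1" for t
  proof -
    define y where "y = (1 - t) *\<^sub>R p + t *\<^sub>R w"
    have shift: "y - c = (p - c) + t *\<^sub>R (w - p)"
      unfolding y_def by (simp add: algebra_simps)
    have dist_y: "(norm (y - c))\<^sup>2 = (norm (p - c))\<^sup>2 + 2 * t * ip + t\<^sup>2 * (norm (w - p))\<^sup>2"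
      unfolding shift norm_add_power2 ip_def by (simp add: power_mult_distrib)
    have "\<phi> y \<le> (1 - t) * \<phi> p + t * \<phi> w"
      unfolding y_def using convex_onD[OF cvx, of t p w] t by auto
    moreover have "\<phi> p + r / 2 * (norm (p - c))\<^sup>2 \<le> \<phi> y + r / 2 * (norm (y - c))\<^sup>2"
      by (rule opt)
    moreover have "t * (?A + t * ?B) = (1 - t) * \<phi> p + t * \<phi> w + r / 2 * (norm (y - c))\<^sup>2
        - (\<phi> p + r / 2 * (norm (p - c))\<^sup>2)"
      unfolding dist_y by (simp add: algebra_simps power2_eq_square)
    ultimately have "0 \<le> t * (?A + t * ?B)" by linarith
    then show ?thesis using t by (simp add: zero_le_mult_iff)
  qed
  have "0 \<le> ?A"
    by (rule nonneg_if_nonneg_plus_small_multiples[OF _ small]) (use r in simp)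
  moreover have "inner (r *\<^sub>R (c - p)) (w - p) = - (r * ip)"
    unfolding ip_def by (simp add: inner_diff_left algebra_simps)
  ultimately show ?thesis by linarith
qed

lemma minorant_subgradient_norm_le:
  fixes f \<phi> :: "'a::real_inner \<Rightarrow> real"
  assumes lip: "\<forall>u v. \<bar>f u - f v\<bar> \<le> M * norm (u - v)" and "0 \<le> M"
    and minorant: "\<And>y. \<phi> y \<le> f y"
    and sub: "\<And>y. \<phi> p + inner s (y - p) \<le> \<phi> y"
  shows "norm s \<le> M"
proof -
  have small: "0 \<le> (M * norm s - (norm s)\<^sup>2) + t * (f p - \<phi> p)" if t: "0 < t" "t \<le> 1" for t
  proof -
    have "\<phi> p + inner s ((1 / t) *\<^sub>R s) \<le> f (p + (1 / t) *\<^sub>R s)"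
      using sub[of "p + (1 / t) *\<^sub>R s"] minorant[of "p + (1 / t) *\<^sub>R s"] by simp
    also have "\<dots> \<le> f p + M * (norm s / t)"
      using lip[rule_format, of "p + (1 / t) *\<^sub>R s" p] t by (simp add: abs_le_iff)
    finally have "(norm s)\<^sup>2 / t \<le> (f p - \<phi> p) + M * norm s / t"
      by (simp add: power2_norm_eq_inner)
    then show ?thesis using t by (simp add: field_simps)
  qed
  have "(norm s)\<^sup>2 \<le> M * norm s"
    using nonneg_if_nonneg_plus_small_multiples[OF _ small] minorant[of p] by simp
  then show ?thesis using \<open>0 \<le> M\<close>
    by (cases "s = 0") (auto simp: power2_eq_square)
qed

lemma lipschitz_const_pos:
  assumes "\<forall>u v. \<bar>f u - f v\<bar> \<le> M * norm (u - v)" and "f a \<noteq> f b"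
  shows "0 < M"
proof -
  have "0 < M * norm (a - b)" using assms(1)[rule_format, of a b] assms(2) by linarith
  then show ?thesis by (simp add: zero_less_mult_iff)
qed

text \<open>The right-hand side is the proximal objective at p + u of the combination, with weights
  1 - l and l, of the aggregate cut at p, whose slope r (c - p) comes from the optimality of p,
  and of a new cut with slope v.\<close>

lemma aggregate_model_lower:
  fixes c p u v :: "'a::real_inner"
  assumes "0 < r"
  shows "a + r / 2 * (norm (p - c))\<^sup>2 + l * (b - a) - l\<^sup>2 * (norm (v - r *\<^sub>R (c - p)))\<^sup>2 / (2 * r)
    \<le> (1 - l) * (a + inner (r *\<^sub>R (c - p)) u) + l * (b + inner v u) + r / 2 * (norm (p + u - c))\<^sup>2"
proof -
  define s where "s = r *\<^sub>R (c - p)"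
  define ip where "ip = inner u (p - c)"
  have "p + u - c = u + (p - c)" by simp
  then have expand: "(norm (p + u - c))\<^sup>2 = (norm u)\<^sup>2 + 2 * ip + (norm (p - c))\<^sup>2"
    unfolding ip_def by (metis norm_add_power2)
  have s_u: "inner s u = - r * ip"
    unfolding s_def ip_def by (simp add: inner_commute inner_diff_right algebra_simps)
  have young: "0 \<le> inner (l *\<^sub>R (v - s)) u + r / 2 * (norm u)\<^sup>2 + l\<^sup>2 * (norm (v - s))\<^sup>2 / (2 * r)"
    using inner_plus_half_norm_ge[OF assms, of "l *\<^sub>R (v - s)" u] by (simp add: power_mult_distrib)
  have "inner (l *\<^sub>R (v - s)) u = l * inner v u - l * inner s u"
    by (simp only: inner_scaleR_left inner_diff_left right_diff_distrib)
  then have "(1 - l) * (a + inner s u) + l * (b + inner v u) + r / 2 * (norm (p + u - c))\<^sup>2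
      = a + r / 2 * (norm (p - c))\<^sup>2 + l * (b - a) + (inner (l *\<^sub>R (v - s)) u + r / 2 * (norm u)\<^sup>2)"
    unfolding expand s_u by (simp add: algebra_simps)
  with young show ?thesis
    unfolding s_def by linarith
qed

lemma inverse_add_le_inverse:
  fixes a b k :: real
  assumes "0 < a" "0 < b" "0 \<le> k" "b \<le> a - k * a\<^sup>2"
  shows "1 / a + k \<le> 1 / b"
proof -
  have "b * (1 / a + k) \<le> (a - k * a\<^sup>2) * (1 / a + k)"
    using assms by (intro mult_right_mono) auto
  also have "\<dots> = 1 - k\<^sup>2 * a\<^sup>2" using assms(1) by (simp add: field_simps power2_eq_square)
  also have "\<dots> \<le> 1" by simp
  finally show ?thesis using assms(2) by (simp add: le_divide_eq mult.commute)
qed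

section \<open>Counting marked steps\<close>

lemma Collect_less_Suc_conj:
  fixes n :: nat
  shows "{d. d < Suc n \<and> P d} = (if P n then insert n {d. d < n \<and> P d} else {d. d < n \<and> P d})"
  by (auto simp: less_Suc_eq)

lemma card_less_Suc_conj:
  fixes n :: nat
  shows "card {d. d < Suc n \<and> P d} = card {d. d < n \<and> P d} + (if P n then 1 else 0)"
  unfolding Collect_less_Suc_conj by auto

lemma sum_less_Suc_conj:
  fixes n :: nat
  shows "(\<Sum>d | d < Suc n \<and> P d. F d) = (\<Sum>d | d < n \<and> P d. F d) + (if P n then F n else 0)"
  unfolding Collect_less_Suc_conj by (simp add: add.commute)

lemma card_marked_plus_unmarked:
  fixes n :: nat
  shows "card {d. d < n \<and> P d} + card {d. d < n \<and> \<not> P d} = n"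
  by (induction n) (simp_all add: card_less_Suc_conj)

lemma last_marked_step:
  fixes i n :: nat
  assumes "i < n" "P i"
  obtains d where "d < n" "P d" "{j. j < n \<and> P j} = insert d {j. j < d \<and> P j}"
    "card {j. j < n \<and> P j} = Suc (card {j. j < d \<and> P j})"
proof -
  let ?S = "{j. j < n \<and> P j}"
  define d where "d = Max ?S"
  have fin: "finite ?S" and ne: "?S \<noteq> {}" using assms by auto
  have d: "d \<in> ?S" unfolding d_def using fin ne by (rule Max_in)
  have above: "\<And>j. j \<in> ?S \<Longrightarrow> j \<le> d" unfolding d_def using fin by simp
  have split: "?S = insert d {j. j < d \<and> P j}"
    using d above by force
  moreover have "card ?S = Suc (card {j. j < d \<and> P j})"
    unfolding split by simp
  ultimately show thesis using that d by blast
qed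

lemma card_marked_le_increment:
  fixes w :: "nat \<Rightarrow> real"
  assumes "\<And>d. d < n \<Longrightarrow> w d \<le> w (Suc d)"
    and "\<And>d. d < n \<Longrightarrow> P d \<Longrightarrow> w d + c \<le> w (Suc d)"
  shows "c * card {d. d < n \<and> P d} \<le> w n - w 0"
  using assms
proof (induction n)
  case 0
  then show ?case by simp
next
  case (Suc n)
  then have "c * card {d. d < n \<and> P d} \<le> w n - w 0" by simp
  then show ?case
    using Suc.prems[of n] by (auto simp: card_less_Suc_conj algebra_simps)
qed

lemma sum_inverse_contracting:
  fixes h :: "nat \<Rightarrow> real"
  assumes "0 \<le> q" and "\<And>d. d \<le> n \<Longrightarrow> 0 < h d"
    and "\<And>d. d < n \<Longrightarrow> h (Suc d) \<le> h d"
    and "\<And>d. d < n \<Longrightarrow> P d \<Longrightarrow> h (Suc d) \<le> q * h d"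
  shows "(1 - q) * (\<Sum>d | d < n \<and> P d. 1 / h d) \<le> q / h n"
  using assms(2-)
proof (induction n)
  case 0
  then show ?case using \<open>0 \<le> q\<close> by simp
next
  case (Suc n)
  then have IH: "(1 - q) * (\<Sum>d | d < n \<and> P d. 1 / h d) \<le> q / h n" by simp
  have pos: "0 < h n" "0 < h (Suc n)" using Suc.prems(1) by auto
  show ?case
  proof (cases "P n")
    case True
    let ?S = "\<Sum>d | d < n \<and> P d. 1 / h d"
    have "(1 - q) * (?S + 1 / h n) = (1 - q) * ?S + (1 - q) / h n"
      by (simp add: algebra_simps)
    also have "\<dots> \<le> q / h n + (1 - q) / h n" using IH by simp
    also have "\<dots> = 1 / h n" by (simp add: add_divide_distrib[symmetric])
    also have "\<dots> \<le> q / h (Suc n)"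
      using Suc.prems(3)[of n] True pos by (simp add: field_simps)
    finally show ?thesis using True by (simp add: sum_less_Suc_conj)
  next
    case False
    have "q / h n \<le> q / h (Suc n)"
      using Suc.prems(2) pos \<open>0 \<le> q\<close> by (intro divide_left_mono) auto
    then show ?thesis using IH False by (simp add: sum_less_Suc_conj)
  qed
qed

section \<open>Proximal bundle iterations\<close>

locale prox_bundle =
  fixes f :: "'a::real_inner \<Rightarrow> real" and g :: "'a \<Rightarrow> 'a"
    and x z :: "nat \<Rightarrow> 'a" and fm :: "nat \<Rightarrow> 'a \<Rightarrow> real"
    and \<beta> \<rho> M :: real
  assumes lip: "\<forall>u v. \<bar>f u - f v\<bar> \<le> M * norm (u - v)"
    and M_pos: "0 < M"
    and subgr: "\<forall>u. g u \<in> subdiff f u"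
    and beta: "0 < \<beta>" "\<beta> < 1"
    and rho: "0 < \<rho>"
    and run: "pbm_run f g \<beta> (\<lambda>k. \<rho>) x z fm"
begin

abbreviation descent :: "nat \<Rightarrow> bool" where
  "descent k \<equiv> is_descent f \<beta> fm x z k"

definition prox_value :: "nat \<Rightarrow> real" where
  "prox_value k = fm k (z (Suc k)) + \<rho> / 2 * (norm (z (Suc k) - x k))\<^sup>2"

definition prox_gap :: "nat \<Rightarrow> real" where
  "prox_gap k = f (x k) - prox_value k"

definition null_rate :: real where
  "null_rate = \<rho> * (1 - \<beta>)\<^sup>2 / (8 * M\<^sup>2)"

lemma model_init: "fm 0 y = f (x 0) + inner (g (x 0)) (y - x 0)"
  and model_convex: "convex_on UNIV (fm k)"
  and prox_value_le: "prox_value k \<le> fm k w + \<rho> / 2 * (norm (w - x k))\<^sup>2"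
  and center_update: "x (Suc k) = (if descent k then z (Suc k) else x k)"
  and model_Suc_le: "fm (Suc k) y \<le> f y"
  and model_cut: "f (z (Suc k)) + inner (g (z (Suc k))) (y - z (Suc k)) \<le> fm (Suc k) y"
  and model_aggregate: "\<not> descent k \<Longrightarrow>
    fm k (z (Suc k)) + inner (\<rho> *\<^sub>R (x k - z (Suc k))) (y - z (Suc k)) \<le> fm (Suc k) y"
  using run unfolding pbm_run_def prox_value_def by auto

lemma subgradient_ineq: "f u + inner (g u) (y - u) \<le> f y"
  using subgr unfolding subdiff_def by auto

lemma model_le: "fm k y \<le> f y"
  by (cases k) (use subgradient_ineq[of "x 0" y] model_init model_Suc_le in auto)

lemma norm_subgradient_le: "norm (g u) \<le> M"
  by (rule minorant_subgradient_norm_le[OF lip]) (use M_pos subgradient_ineq in auto)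

lemma prox_subgradient:
  "fm k (z (Suc k)) + inner (\<rho> *\<^sub>R (x k - z (Suc k))) (y - z (Suc k)) \<le> fm k y"
  by (rule prox_point_subgradient[OF model_convex rho])
    (use prox_value_le in \<open>simp add: prox_value_def\<close>)

lemma norm_prox_subgradient_le: "norm (\<rho> *\<^sub>R (x k - z (Suc k))) \<le> M"
  by (rule minorant_subgradient_norm_le[OF lip _ model_le prox_subgradient]) (use M_pos in simp)

lemma prox_gap_nonneg: "0 \<le> prox_gap k"
  using prox_value_le[of k "x k"] model_le[of k "x k"] unfolding prox_gap_def by simp

lemma prox_gap_le_model_gap: "prox_gap k \<le> f (x k) - fm k (z (Suc k))"
  unfolding prox_gap_def prox_value_def using rho by simp

lemma descent_decrease:
  assumes "descent k"
  shows "f (x (Suc k)) \<le> f (x k) - \<beta> * prox_gap k"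
proof -
  have "\<beta> * (f (x k) - fm k (z (Suc k))) \<le> f (x k) - f (x (Suc k))"
    using assms center_update[of k] unfolding is_descent_def by simp
  moreover have "\<beta> * prox_gap k \<le> \<beta> * (f (x k) - fm k (z (Suc k)))"
    using prox_gap_le_model_gap beta by (intro mult_left_mono) auto
  ultimately show ?thesis by linarith
qed

lemma null_center: "\<not> descent k \<Longrightarrow> x (Suc k) = x k"
  using center_update by simp

lemma center_value_mono: "f (x (Suc k)) \<le> f (x k)"
proof (cases "descent k")
  case True
  have "0 \<le> \<beta> * prox_gap k" using beta prox_gap_nonneg by simp
  then show ?thesis using descent_decrease[OF True] by linarith
qed (simp add: null_center)

lemma prox_value_null_increase:
  assumes null: "\<not> descent k" and l: "0 \<le> l" "l \<le> 1"
  shows "prox_value k + l * (f (z (Suc k)) - fm k (z (Suc k))) - 2 * l\<^sup>2 * M\<^sup>2 / \<rho>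
    \<le> prox_value (Suc k)"
proof -
  let ?p = "z (Suc k)" and ?p' = "z (Suc (Suc k))"
  let ?s = "\<rho> *\<^sub>R (x k - ?p)"
  have "(1 - l) * (fm k ?p + inner ?s (?p' - ?p)) + l * (f ?p + inner (g ?p) (?p' - ?p))
      \<le> fm (Suc k) ?p'"
  proof -
    have "(1 - l) * (fm k ?p + inner ?s (?p' - ?p)) \<le> (1 - l) * fm (Suc k) ?p'"
      using model_aggregate[OF null] l by (intro mult_left_mono) auto
    moreover have "l * (f ?p + inner (g ?p) (?p' - ?p)) \<le> l * fm (Suc k) ?p'"
      using model_cut l by (intro mult_left_mono) auto
    ultimately show ?thesis by (simp add: algebra_simps)
  qed
  moreover have "l\<^sup>2 * (norm (g ?p - ?s))\<^sup>2 / (2 * \<rho>) \<le> 2 * l\<^sup>2 * M\<^sup>2 / \<rho>"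
  proof -
    have "norm (g ?p - ?s) \<le> 2 * M"
      using norm_triangle_ineq4[of "g ?p" ?s] norm_subgradient_le[of ?p] norm_prox_subgradient_le[of k]
      by linarith
    then have "l\<^sup>2 * (norm (g ?p - ?s))\<^sup>2 \<le> l\<^sup>2 * (2 * M)\<^sup>2"
      by (intro mult_left_mono power_mono) auto
    then show ?thesis using rho by (simp add: field_simps power2_eq_square)
  qed
  moreover note aggregate_model_lower[OF rho, where a = "fm k ?p" and p = ?p and c = "x k"
      and l = l and b = "f ?p" and v = "g ?p" and u = "?p' - ?p"]
  ultimately show ?thesis
    unfolding prox_value_def null_center[OF null] by (simp add: algebra_simps)
qed

lemma linearization_prox_ge: "f u - M\<^sup>2 / (2 * \<rho>) \<le> f u + inner (g u) w + \<rho> / 2 * (norm w)\<^sup>2"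
proof -
  have "(norm (g u))\<^sup>2 \<le> M\<^sup>2" using norm_subgradient_le by (intro power_mono) auto
  then have "(norm (g u))\<^sup>2 / (2 * \<rho>) \<le> M\<^sup>2 / (2 * \<rho>)" using rho by (intro divide_right_mono) auto
  with inner_plus_half_norm_ge[OF rho, of "g u" w] show ?thesis by linarith
qed

lemma prox_gap_le: "prox_gap k \<le> M\<^sup>2 / (2 * \<rho>)"
proof (induction k)
  case 0
  have "prox_value 0 = f (x 0) + inner (g (x 0)) (z 1 - x 0) + \<rho> / 2 * (norm (z 1 - x 0))\<^sup>2"
    unfolding prox_value_def model_init by simp
  then show ?case
    using linearization_prox_ge[of "x 0" "z 1 - x 0"] unfolding prox_gap_def by linarith
next
  case (Suc k)
  show ?case
  proof (cases "descent k")
    case True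
    then have center: "x (Suc k) = z (Suc k)" using center_update by simp
    have "f (z (Suc k)) + inner (g (z (Suc k))) (z (Suc (Suc k)) - z (Suc k))
        + \<rho> / 2 * (norm (z (Suc (Suc k)) - z (Suc k)))\<^sup>2 \<le> prox_value (Suc k)"
      unfolding prox_value_def center using model_cut[of k "z (Suc (Suc k))"] by simp
    then show ?thesis
      using linearization_prox_ge[of "z (Suc k)" "z (Suc (Suc k)) - z (Suc k)"]
      unfolding prox_gap_def center by linarith
  next
    case False
    then show ?thesis
      using Suc.IH prox_value_null_increase[OF False, of 0] null_center[OF False]
      unfolding prox_gap_def by simp
  qed
qed

lemma prox_gap_null_decrease:
  assumes null: "\<not> descent k"
  shows "prox_gap (Suc k) \<le> prox_gap k - null_rate * (prox_gap k)\<^sup>2"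
proof -
  let ?e = "prox_gap k" and ?p = "z (Suc k)"
  \<comment> \<open>l maximizes l (1 - \<beta>) e - 2 l^2 M^2 / \<rho>\<close>
  define l where "l = \<rho> * (1 - \<beta>) * ?e / (4 * M\<^sup>2)"
  have failed_test: "(1 - \<beta>) * ?e \<le> f ?p - fm k ?p"
  proof -
    have "f (x k) - f ?p < \<beta> * (f (x k) - fm k ?p)"
      using null unfolding is_descent_def by simp
    moreover have "(1 - \<beta>) * ?e \<le> (1 - \<beta>) * (f (x k) - fm k ?p)"
      using prox_gap_le_model_gap beta by (intro mult_left_mono) auto
    ultimately show ?thesis by (simp add: algebra_simps)
  qed
  have "0 \<le> l" unfolding l_def using rho beta prox_gap_nonneg[of k] by simp
  moreover have "l \<le> 1"
  proof -
    have "l \<le> \<rho> * (1 - \<beta>) * (M\<^sup>2 / (2 * \<rho>)) / (4 * M\<^sup>2)"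
      unfolding l_def using prox_gap_le[of k] rho beta
      by (intro divide_right_mono mult_left_mono) auto
    also have "\<dots> = (1 - \<beta>) / 8" using rho M_pos by (simp add: field_simps)
    finally show ?thesis using beta by simp
  qed
  ultimately have "prox_value k + l * (f ?p - fm k ?p) - 2 * l\<^sup>2 * M\<^sup>2 / \<rho> \<le> prox_value (Suc k)"
    by (rule prox_value_null_increase[OF null])
  moreover have "l * ((1 - \<beta>) * ?e) \<le> l * (f ?p - fm k ?p)"
    using failed_test \<open>0 \<le> l\<close> by (rule mult_left_mono)
  moreover have "l * ((1 - \<beta>) * ?e) - 2 * l\<^sup>2 * M\<^sup>2 / \<rho> = null_rate * ?e\<^sup>2"
    unfolding l_def null_rate_def using rho M_pos by (simp add: field_simps power2_eq_square)
  ultimately show ?thesis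
    unfolding prox_gap_def using null_center[OF null] by simp
qed

lemma null_rate_pos: "0 < null_rate"
  unfolding null_rate_def using rho beta M_pos by simp

lemma card_null_steps_le:
  assumes pos: "\<And>d. d \<le> n \<Longrightarrow> 0 < prox_gap d"
  shows "null_rate * card {d. d < n \<and> \<not> descent d}
    \<le> (\<Sum>d | d < n \<and> descent d. 1 / prox_gap d) + 1 / prox_gap n"
proof -
  define w where "w m = 1 / prox_gap m + (\<Sum>d | d < m \<and> descent d. 1 / prox_gap d)" for m
  have step: "w (Suc d) = w d + 1 / prox_gap (Suc d) - (if descent d then 0 else 1 / prox_gap d)" for d
    unfolding w_def by (simp add: sum_less_Suc_conj)
  have null_jump: "w d + null_rate \<le> w (Suc d)" if "d < n" "\<not> descent d" for d
  proof -
    have "0 < prox_gap d" "0 < prox_gap (Suc d)" using pos that by auto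
    then have "1 / prox_gap d + null_rate \<le> 1 / prox_gap (Suc d)"
      using inverse_add_le_inverse[OF _ _ _ prox_gap_null_decrease[OF that(2)]] null_rate_pos
      by simp
    then show ?thesis using step[of d] that by simp
  qed
  have "null_rate * card {d. d < n \<and> \<not> descent d} \<le> w n - w 0"
  proof (rule card_marked_le_increment)
    fix d assume "d < n"
    show "w d \<le> w (Suc d)"
    proof (cases "descent d")
      case True
      then show ?thesis using step[of d] pos[of "Suc d"] \<open>d < n\<close> by simp
    next
      case False
      then show ?thesis using null_jump[OF \<open>d < n\<close>] null_rate_pos by simp
    qed
  qed (rule null_jump)
  moreover have "w n - w 0 \<le> (\<Sum>d | d < n \<and> descent d. 1 / prox_gap d) + 1 / prox_gap n"
    unfolding w_def using prox_gap_nonneg[of 0] by simp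
  ultimately show ?thesis by linarith
qed

end

section \<open>Complexity with constant stepsize\<close>

locale pbm_complexity = prox_bundle f g x z fm \<beta> \<rho> M
  for f :: "'a::euclidean_space \<Rightarrow> real" and g x z fm \<beta> \<rho> M +
  fixes D2 \<epsilon> :: real
  assumes convex: "convex_on UNIV f"
    and attained: "Xstar f \<noteq> {}"
    and bdd: "bdd_above (range (\<lambda>k. (infdist (x k) (Xstar f))\<^sup>2))"
    and D2_def: "D2 = (SUP k. (infdist (x k) (Xstar f))\<^sup>2)"
    and D2_pos: "0 < D2"
    and eps_pos: "0 < \<epsilon>"
begin

definition subopt :: "nat \<Rightarrow> real" where
  "subopt k = f (x k) - fstar f"

definition far_descent :: "nat \<Rightarrow> bool" where
  "far_descent k \<longleftrightarrow> descent k \<and> \<rho> * D2 \<le> subopt k"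

definition near_descent :: "nat \<Rightarrow> bool" where
  "near_descent k \<longleftrightarrow> descent k \<and> subopt k < \<rho> * D2"

lemma rho_D2_pos: "0 < \<rho> * D2"
  using rho D2_pos by simp

lemma Xstar_closed: "closed (Xstar f)"
  using convex_on_continuous[OF open_UNIV convex]
  unfolding Xstar_def by (simp add: closed_Collect_eq continuous_on_const)

lemma near_minimizer:
  obtains y where "f y = fstar f" "(norm (y - x k))\<^sup>2 \<le> D2"
proof -
  obtain y where y: "y \<in> Xstar f" "infdist (x k) (Xstar f) = dist (x k) y"
    using infdist_attains_inf[OF Xstar_closed attained] by blast
  have "(infdist (x k) (Xstar f))\<^sup>2 \<le> D2"
    unfolding D2_def by (rule cSUP_upper[OF _ bdd]) simp
  then show thesis
    using that y unfolding Xstar_def by (simp add: dist_norm norm_minus_commute)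
qed

lemma prox_gap_ge:
  assumes t: "0 \<le> t" "t \<le> 1"
  shows "t * subopt k - \<rho> * t\<^sup>2 * D2 / 2 \<le> prox_gap k"
proof -
  obtain y where y: "f y = fstar f" "(norm (y - x k))\<^sup>2 \<le> D2" by (rule near_minimizer)
  define w where "w = (1 - t) *\<^sub>R x k + t *\<^sub>R y"
  have "w - x k = t *\<^sub>R (y - x k)" unfolding w_def by (simp add: algebra_simps)
  then have "(norm (w - x k))\<^sup>2 \<le> t\<^sup>2 * D2"
    using y(2) t by (simp add: power_mult_distrib mult_left_mono)
  then have "\<rho> / 2 * (norm (w - x k))\<^sup>2 \<le> \<rho> / 2 * (t\<^sup>2 * D2)"
    using rho by (intro mult_left_mono) auto
  moreover have "f w \<le> (1 - t) * f (x k) + t * f y"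
    unfolding w_def using convex_onD[OF convex, of t "x k" y] t by auto
  moreover have "prox_value k \<le> f w + \<rho> / 2 * (norm (w - x k))\<^sup>2"
    using prox_value_le[of k w] model_le[of k w] by linarith
  ultimately show ?thesis
    unfolding prox_gap_def subopt_def y(1) by (simp add: algebra_simps)
qed

lemma prox_gap_ge_half: "\<rho> * D2 \<le> subopt k \<Longrightarrow> subopt k / 2 \<le> prox_gap k"
  using prox_gap_ge[of 1 k] by simp

lemma prox_gap_ge_square:
  assumes "0 \<le> subopt k" "subopt k \<le> \<rho> * D2"
  shows "(subopt k)\<^sup>2 / (2 * \<rho> * D2) \<le> prox_gap k"
proof -
  let ?t = "subopt k / (\<rho> * D2)"
  have "?t * subopt k - \<rho> * ?t\<^sup>2 * D2 / 2 \<le> prox_gap k"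
    using assms rho_D2_pos by (intro prox_gap_ge) auto
  moreover have "?t * subopt k - \<rho> * ?t\<^sup>2 * D2 / 2 = (subopt k)\<^sup>2 / (2 * \<rho> * D2)"
    using rho D2_pos by (simp add: field_simps power2_eq_square)
  ultimately show ?thesis by simp
qed

lemma prox_gap_pos:
  assumes "0 < subopt k"
  shows "0 < prox_gap k"
proof (cases "\<rho> * D2 \<le> subopt k")
  case True
  then show ?thesis using prox_gap_ge_half[of k] assms by linarith
next
  case False
  have "0 < (subopt k)\<^sup>2 / (2 * \<rho> * D2)" using assms rho D2_pos by simp
  then show ?thesis using prox_gap_ge_square[of k] assms False by linarith
qed

lemma subopt_descent: "descent k \<Longrightarrow> subopt (Suc k) \<le> subopt k - \<beta> * prox_gap k"
  using descent_decrease unfolding subopt_def by simp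

lemma subopt_null: "\<not> descent k \<Longrightarrow> subopt (Suc k) = subopt k"
  using null_center unfolding subopt_def by simp

lemma subopt_mono: "subopt (Suc k) \<le> subopt k"
  using center_value_mono unfolding subopt_def by simp

lemma far_descent_contracts:
  assumes "far_descent k"
  shows "subopt (Suc k) \<le> (1 - \<beta> / 2) * subopt k"
proof -
  have "\<beta> * (subopt k / 2) \<le> \<beta> * prox_gap k"
    using assms prox_gap_ge_half[of k] beta unfolding far_descent_def
    by (intro mult_left_mono) auto
  then show ?thesis
    using subopt_descent[of k] assms unfolding far_descent_def by (simp add: algebra_simps)
qed

lemma near_descent_decrease:
  assumes "near_descent k" "0 \<le> subopt k"
  shows "subopt (Suc k) \<le> subopt k - \<beta> / (2 * \<rho> * D2) * (subopt k)\<^sup>2"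
proof -
  have "\<beta> * ((subopt k)\<^sup>2 / (2 * \<rho> * D2)) \<le> \<beta> * prox_gap k"
    using assms prox_gap_ge_square[of k] beta unfolding near_descent_def
    by (intro mult_left_mono) auto
  then show ?thesis
    using subopt_descent[of k] assms(1) unfolding near_descent_def by simp
qed

lemma last_far_descent:
  assumes above: "\<forall>d<n. \<epsilon> < subopt d" and "i < n" "far_descent i"
  obtains d where "d < n" "\<rho> * D2 \<le> subopt d" "\<epsilon> < subopt d"
    "\<beta> / 2 * (real (card {j. j < n \<and> far_descent j}) - 1) \<le> ln (subopt 0 / subopt d)"
proof -
  obtain d where d: "d < n" "far_descent d"
    and card: "card {j. j < n \<and> far_descent j} = Suc (card {j. j < d \<and> far_descent j})"
    using last_marked_step[of i n "far_descent", OF assms(2,3)] by blast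
  have pos: "0 < subopt j" if "j \<le> d" for j
    using above d(1) that eps_pos by (metis le_less_trans less_trans)
  have "\<beta> / 2 * card {j. j < d \<and> far_descent j} \<le> - ln (subopt d) - - ln (subopt 0)"
  proof (rule card_marked_le_increment)
    fix j assume "j < d"
    then have pos_j: "0 < subopt j" "0 < subopt (Suc j)" using pos by auto
    then show "- ln (subopt j) \<le> - ln (subopt (Suc j))" using subopt_mono[of j] by simp
    assume "far_descent j"
    then have "ln (subopt (Suc j)) \<le> ln ((1 - \<beta> / 2) * subopt j)"
      using far_descent_contracts pos_j by (intro ln_mono) auto
    also have "\<dots> = ln (1 - \<beta> / 2) + ln (subopt j)"
      using beta pos_j by (simp add: ln_mult)
    also have "\<dots> \<le> - (\<beta> / 2) + ln (subopt j)"
      using ln_le_minus_one[of "1 - \<beta> / 2"] beta by simp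
    finally show "- ln (subopt j) + \<beta> / 2 \<le> - ln (subopt (Suc j))" by simp
  qed
  moreover have "ln (subopt 0 / subopt d) = ln (subopt 0) - ln (subopt d)"
    using pos[of 0] pos[of d] by (simp add: ln_div)
  ultimately show thesis
    using that[of d] d above card unfolding far_descent_def by simp
qed

lemma last_near_descent:
  assumes above: "\<forall>d<n. \<epsilon> < subopt d" and "i < n" "near_descent i"
  obtains d where "\<epsilon> < subopt d"
    "\<beta> / (2 * \<rho> * D2) * (real (card {j. j < n \<and> near_descent j}) - 1)
      \<le> 1 / subopt d - 1 / (\<rho> * D2)"
proof -
  obtain d where d: "d < n" "near_descent d"
    and card: "card {j. j < n \<and> near_descent j} = Suc (card {j. j < d \<and> near_descent j})"
    using last_marked_step[of i n near_descent, OF assms(2,3)] by blast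
  have pos: "0 < subopt j" if "j \<le> d" for j
    using above d(1) that eps_pos by (metis le_less_trans less_trans)
  define a where "a = \<beta> / (2 * \<rho> * D2)"
  define v where "v j = 1 / min (subopt j) (\<rho> * D2)" for j
  have "a * card {j. j < d \<and> near_descent j} \<le> v d - v 0"
  proof (rule card_marked_le_increment)
    fix j assume "j < d"
    then have pos_j: "0 < subopt j" "0 < subopt (Suc j)" using pos by auto
    then show "v j \<le> v (Suc j)"
      unfolding v_def using subopt_mono[of j] rho_D2_pos
      by (intro divide_left_mono) (auto simp: min_def)
    assume "near_descent j"
    then have "subopt (Suc j) < \<rho> * D2" "subopt j < \<rho> * D2"
      using subopt_mono[of j] unfolding near_descent_def by auto
    moreover have "1 / subopt j + a \<le> 1 / subopt (Suc j)"
      using inverse_add_le_inverse[OF pos_j _ near_descent_decrease] \<open>near_descent j\<close> pos_j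
        beta rho D2_pos unfolding a_def by simp
    ultimately show "v j + a \<le> v (Suc j)" unfolding v_def by simp
  qed
  moreover have "v d = 1 / subopt d"
    using d(2) unfolding v_def near_descent_def by simp
  moreover have "1 / (\<rho> * D2) \<le> v 0"
    unfolding v_def using pos[of 0] rho_D2_pos by (intro divide_left_mono) auto
  ultimately show thesis
    using that[of d] above d(1) card unfolding a_def by simp
qed

lemma card_near_descents_le:
  assumes above: "\<forall>d<n. \<epsilon> < subopt d" and "\<epsilon> \<le> \<rho> * D2"
  shows "real (card {j. j < n \<and> near_descent j}) \<le> 2 * \<rho> * D2 / (\<beta> * \<epsilon>) - 1"
proof (cases "\<exists>i<n. near_descent i")
  case False
  have "\<beta> * \<epsilon> \<le> \<rho> * D2" using assms(2) beta eps_pos by (smt (verit) mult_le_cancel_right1)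
  then have "2 \<le> 2 * \<rho> * D2 / (\<beta> * \<epsilon>)" using beta eps_pos by (simp add: field_simps)
  moreover have empty: "{j. j < n \<and> near_descent j} = {}" using False by auto
  ultimately show ?thesis unfolding empty by simp
next
  case True
  let ?near = "real (card {j. j < n \<and> near_descent j})"
  obtain d where d: "\<epsilon> < subopt d"
    and bound: "\<beta> / (2 * \<rho> * D2) * (?near - 1) \<le> 1 / subopt d - 1 / (\<rho> * D2)"
    using True last_near_descent[OF above] by metis
  have "1 / subopt d < 1 / \<epsilon>" using d eps_pos by (simp add: frac_less2)
  with bound have "\<beta> / (2 * \<rho> * D2) * (?near - 1) < 1 / \<epsilon> - 1 / (\<rho> * D2)" by linarith
  then have "\<beta> / (2 * \<rho> * D2) * (?near - 1) * (2 * \<rho> * D2 / \<beta>)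
      < (1 / \<epsilon> - 1 / (\<rho> * D2)) * (2 * \<rho> * D2 / \<beta>)"
    using beta rho D2_pos by (intro mult_strict_right_mono) auto
  moreover have "\<beta> / (2 * \<rho> * D2) * (?near - 1) * (2 * \<rho> * D2 / \<beta>) = ?near - 1"
    using beta rho D2_pos by simp
  moreover have "(1 / \<epsilon> - 1 / (\<rho> * D2)) * (2 * \<rho> * D2 / \<beta>)
      = 2 * \<rho> * D2 / (\<beta> * \<epsilon>) - 2 / \<beta>"
    using beta rho D2_pos eps_pos by (simp add: field_simps)
  ultimately have "?near - 1 < 2 * \<rho> * D2 / (\<beta> * \<epsilon>) - 2 / \<beta>" by simp
  moreover have "2 \<le> 2 / \<beta>" using beta by (simp add: field_simps)
  ultimately show ?thesis by simp
qed

lemma no_near_descents: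
  assumes "\<forall>d<n. \<epsilon> < subopt d" and "\<rho> * D2 \<le> \<epsilon>"
  shows "{d. d < n \<and> near_descent d} = {}"
  using assms unfolding near_descent_def by force

lemma card_far_descents_le:
  assumes above: "\<forall>d<n. \<epsilon> < subopt d"
  defines "L \<equiv> 2 * ln (subopt 0 / (\<rho> * D2)) / \<beta>"
  shows "real (card {d. d < n \<and> far_descent d})
    \<le> real_of_int (max \<lceil>L\<rceil> 0) + (if \<rho> * D2 < \<epsilon> then 0 else 1)"
proof (cases "\<exists>i<n. far_descent i")
  case False
  then have empty: "{d. d < n \<and> far_descent d} = {}" by auto
  show ?thesis unfolding empty by simp
next
  case True
  let ?far = "card {d. d < n \<and> far_descent d}"
  obtain i where i: "i < n" "far_descent i" using True by blast
  then obtain d where d: "\<rho> * D2 \<le> subopt d" "\<epsilon> < subopt d"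
    and log: "\<beta> / 2 * (real ?far - 1) \<le> ln (subopt 0 / subopt d)"
    using last_far_descent[OF above] by metis
  have "0 < subopt 0" using above i(1) eps_pos by force
  then have "subopt 0 / subopt d \<le> subopt 0 / (\<rho> * D2)"
    and "\<rho> * D2 < \<epsilon> \<Longrightarrow> subopt 0 / subopt d < subopt 0 / (\<rho> * D2)"
    and "0 < subopt 0 / subopt d"
    using d rho_D2_pos by (auto intro!: divide_left_mono divide_strict_left_mono)
  then have ln_le: "ln (subopt 0 / subopt d) \<le> ln (subopt 0 / (\<rho> * D2))"
    and ln_less: "\<rho> * D2 < \<epsilon> \<Longrightarrow> ln (subopt 0 / subopt d) < ln (subopt 0 / (\<rho> * D2))"
    by simp_all
  have "real ?far - 1 \<le> 2 * ln (subopt 0 / subopt d) / \<beta>"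
    using log beta by (simp add: field_simps)
  then have le: "real ?far - 1 \<le> L" and less: "\<rho> * D2 < \<epsilon> \<Longrightarrow> real ?far - 1 < L"
    unfolding L_def using ln_le ln_less beta by (auto simp: divide_right_mono divide_strict_right_mono
      intro: order_trans order_le_less_trans)
  show ?thesis
  proof (cases "\<rho> * D2 < \<epsilon>")
    case True
    then have "real ?far - 1 < of_int \<lceil>L\<rceil>" using less le_of_int_ceiling by (meson order_less_le_trans)
    then have "int ?far \<le> max \<lceil>L\<rceil> 0" by linarith
    then have "real_of_int (int ?far) \<le> real_of_int (max \<lceil>L\<rceil> 0)" by (simp only: of_int_le_iff)
    then show ?thesis using True by simp
  next
    case False
    have "real_of_int \<lceil>L\<rceil> \<le> real_of_int (max \<lceil>L\<rceil> 0)" by simp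
    then have "real ?far \<le> real_of_int (max \<lceil>L\<rceil> 0) + 1"
      using le le_of_int_ceiling[of L] by linarith
    then show ?thesis using False by simp
  qed
qed

lemma descents_split:
  "{d. d < n \<and> descent d} = {d. d < n \<and> far_descent d} \<union> {d. d < n \<and> near_descent d}"
  "{d. d < n \<and> far_descent d} \<inter> {d. d < n \<and> near_descent d} = {}"
  unfolding far_descent_def near_descent_def by auto

lemma card_descents_le:
  assumes above: "\<forall>d<n. \<epsilon> < subopt d"
  shows "real (card {d. d < n \<and> descent d})
    \<le> 2 * \<rho> * D2 / (\<beta> * \<epsilon>) + real_of_int (max \<lceil>2 * ln (subopt 0 / (\<rho> * D2)) / \<beta>\<rceil> 0)"
proof -
  let ?R = "2 * \<rho> * D2 / (\<beta> * \<epsilon>)" and ?C = "real_of_int (max \<lceil>2 * ln (subopt 0 / (\<rho> * D2)) / \<beta>\<rceil> 0)"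
  let ?far = "card {d. d < n \<and> far_descent d}" and ?near = "card {d. d < n \<and> near_descent d}"
  have "card {d. d < n \<and> descent d} = ?far + ?near"
    using card_Un_disjoint[OF _ _ descents_split(2)] descents_split(1) by simp
  moreover have "real ?far + real ?near \<le> ?R + ?C"
  proof (cases "\<rho> * D2 < \<epsilon>")
    case True
    then have "real ?near = 0" using no_near_descents[OF above] by simp
    moreover have "real ?far \<le> ?C" using card_far_descents_le[OF above] True by simp
    moreover have "0 \<le> ?R" using rho D2_pos beta eps_pos by simp
    ultimately show ?thesis by linarith
  next
    case False
    then show ?thesis using card_far_descents_le[OF above] card_near_descents_le[OF above] by simp
  qed
  ultimately show ?thesis by simp
qed

lemma sum_far_descents_le:
  assumes above: "\<forall>d<n. \<epsilon> < subopt d"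
  shows "(\<Sum>d | d < n \<and> far_descent d. 1 / subopt d) \<le> 2 / (\<beta> * (\<rho> * D2))"
proof (cases "\<exists>i<n. far_descent i")
  case False
  then have empty: "{d. d < n \<and> far_descent d} = {}" by auto
  show ?thesis unfolding empty using beta rho_D2_pos by simp
next
  case True
  then obtain i where "i < n" "far_descent i" by blast
  then obtain d where d: "d < n" "far_descent d"
    and split: "{j. j < n \<and> far_descent j} = insert d {j. j < d \<and> far_descent j}"
    using last_marked_step[of i n far_descent] by blast
  have pos: "0 < subopt j" if "j \<le> d" for j
    using above d(1) that eps_pos by (metis le_less_trans less_trans)
  let ?S = "\<Sum>j | j < d \<and> far_descent j. 1 / subopt j"
  have "(1 - (1 - \<beta> / 2)) * ?S \<le> (1 - \<beta> / 2) / subopt d"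
    by (rule sum_inverse_contracting) (use beta pos subopt_mono far_descent_contracts in auto)
  then have "\<beta> / 2 * (1 / subopt d + ?S) \<le> 1 / subopt d"
    by (simp add: algebra_simps diff_divide_distrib)
  also have "\<dots> \<le> 1 / (\<rho> * D2)"
    using d(2) rho_D2_pos unfolding far_descent_def by (intro divide_left_mono) auto
  finally have "1 / subopt d + ?S \<le> (1 / (\<rho> * D2)) / (\<beta> / 2)"
    using beta by (subst pos_le_divide_eq) (auto simp: mult.commute)
  also have "\<dots> = 2 / (\<beta> * (\<rho> * D2))" by simp
  finally have "1 / subopt d + ?S \<le> 2 / (\<beta> * (\<rho> * D2))" .
  then show ?thesis unfolding split by simp
qed

lemma sum_inverse_prox_gap_far_le:
  assumes above: "\<forall>d<n. \<epsilon> < subopt d"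
  shows "(\<Sum>d | d < n \<and> far_descent d. 1 / prox_gap d) \<le> 4 / (\<beta> * (\<rho> * D2))"
proof -
  let ?far = "{d. d < n \<and> far_descent d}"
  have "(\<Sum>d\<in>?far. 1 / prox_gap d) \<le> (\<Sum>d\<in>?far. 2 * (1 / subopt d))"
  proof (rule sum_mono)
    fix d assume "d \<in> ?far"
    then have "subopt d / 2 \<le> prox_gap d" "0 < subopt d / 2"
      using above prox_gap_ge_half eps_pos unfolding far_descent_def by force+
    then show "1 / prox_gap d \<le> 2 * (1 / subopt d)"
      using frac_le[of 1 1 "subopt d / 2" "prox_gap d"] by simp
  qed
  also have "\<dots> = 2 * (\<Sum>d\<in>?far. 1 / subopt d)"
    by (rule sum_distrib_left[symmetric])
  also have "\<dots> \<le> 4 / (\<beta> * (\<rho> * D2))"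
    using sum_far_descents_le[OF above] by simp
  finally show ?thesis .
qed

lemma sum_inverse_prox_gap_near_le:
  assumes above: "\<forall>d<n. \<epsilon> < subopt d"
  shows "(\<Sum>d | d < n \<and> near_descent d. 1 / prox_gap d) \<le> 4 * \<rho>\<^sup>2 * D2\<^sup>2 / (\<beta> * \<epsilon> ^ 3)"
proof -
  let ?near = "{d. d < n \<and> near_descent d}"
  have "(\<Sum>d\<in>?near. 1 / prox_gap d) \<le> card ?near * (2 * \<rho> * D2 / \<epsilon>\<^sup>2)"
  proof (rule sum_bounded_above)
    fix d assume "d \<in> ?near"
    then have between: "\<epsilon> < subopt d" "subopt d < \<rho> * D2"
      using above unfolding near_descent_def by auto
    then have "\<epsilon>\<^sup>2 / (2 * \<rho> * D2) \<le> (subopt d)\<^sup>2 / (2 * \<rho> * D2)"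
      using eps_pos rho D2_pos by (intro divide_right_mono power_mono) auto
    also have "\<dots> \<le> prox_gap d" using between eps_pos by (intro prox_gap_ge_square) auto
    finally have "\<epsilon>\<^sup>2 / (2 * \<rho> * D2) \<le> prox_gap d" .
    moreover have "0 < \<epsilon>\<^sup>2 / (2 * \<rho> * D2)" using eps_pos rho D2_pos by simp
    ultimately show "1 / prox_gap d \<le> 2 * \<rho> * D2 / \<epsilon>\<^sup>2"
      using frac_le[of 1 1 "\<epsilon>\<^sup>2 / (2 * \<rho> * D2)" "prox_gap d"] by simp
  qed
  also have "\<dots> \<le> 2 * \<rho> * D2 / (\<beta> * \<epsilon>) * (2 * \<rho> * D2 / \<epsilon>\<^sup>2)"
  proof (rule mult_right_mono)
    show "real (card ?near) \<le> 2 * \<rho> * D2 / (\<beta> * \<epsilon>)"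
    proof (cases "\<epsilon> \<le> \<rho> * D2")
      case True
      then show ?thesis using card_near_descents_le[OF above] by fastforce
    next
      case False
      then have "\<rho> * D2 \<le> \<epsilon>" by simp
      then have empty: "?near = {}" by (rule no_near_descents[OF above])
      show ?thesis unfolding empty using rho D2_pos beta eps_pos by simp
    qed
  qed (use rho D2_pos in simp)
  also have "\<dots> = 4 * \<rho>\<^sup>2 * D2\<^sup>2 / (\<beta> * \<epsilon> ^ 3)"
    by (simp add: field_simps power2_eq_square power3_eq_cube)
  finally show ?thesis .
qed

lemma sum_inverse_prox_gap_descents_le:
  assumes above: "\<forall>d<n. \<epsilon> < subopt d"
  shows "(\<Sum>d | d < n \<and> descent d. 1 / prox_gap d)
    \<le> 4 / (\<beta> * (\<rho> * D2)) + 4 * \<rho>\<^sup>2 * D2\<^sup>2 / (\<beta> * \<epsilon> ^ 3)"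
proof -
  have "(\<Sum>d | d < n \<and> descent d. 1 / prox_gap d)
      = (\<Sum>d | d < n \<and> far_descent d. 1 / prox_gap d) + (\<Sum>d | d < n \<and> near_descent d. 1 / prox_gap d)"
    unfolding descents_split(1) by (rule sum.union_disjoint) (auto simp: descents_split(2))
  then show ?thesis
    using sum_inverse_prox_gap_far_le[OF above] sum_inverse_prox_gap_near_le[OF above] by simp
qed

lemma descent_sum_bound_div_null_rate:
  "(4 / (\<beta> * (\<rho> * D2)) + 4 * \<rho>\<^sup>2 * D2\<^sup>2 / (\<beta> * \<epsilon> ^ 3)) / null_rate
    = 32 * \<rho> * M\<^sup>2 * D2\<^sup>2 / (\<beta> * (1 - \<beta>)\<^sup>2 * \<epsilon> ^ 3) + 32 * M\<^sup>2 / (\<beta> * (1 - \<beta>)\<^sup>2 * \<rho>\<^sup>2 * D2)"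
proof -
  have "(4 / (\<beta> * (\<rho> * D2)) + 4 * \<rho>\<^sup>2 * D2\<^sup>2 / (\<beta> * \<epsilon> ^ 3)) / (\<rho> * c / (8 * M\<^sup>2))
      = 32 * \<rho> * M\<^sup>2 * D2\<^sup>2 / (\<beta> * c * \<epsilon> ^ 3) + 32 * M\<^sup>2 / (\<beta> * c * \<rho>\<^sup>2 * D2)"
    if "c \<noteq> 0" for c
    using that rho beta D2_pos eps_pos M_pos by (simp add: field_simps power2_eq_square power3_eq_cube)
  then show ?thesis unfolding null_rate_def using beta by simp
qed

lemma card_null_steps_before_eps_solution:
  assumes above: "\<forall>d<K. \<epsilon> < subopt d" and success: "subopt K \<le> \<epsilon>"
  shows "real (card {d. d < K \<and> \<not> descent d})
    \<le> 48 * \<rho> * M\<^sup>2 * D2\<^sup>2 / (\<beta> * (1 - \<beta>)\<^sup>2 * \<epsilon> ^ 3) + 32 * M\<^sup>2 / (\<beta> * (1 - \<beta>)\<^sup>2 * \<rho>\<^sup>2 * D2)"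
proof (cases K)
  case 0
  then show ?thesis using rho beta D2_pos eps_pos by simp
next
  case (Suc k)
  have "descent k"
  proof (rule ccontr)
    assume "\<not> descent k"
    then have "subopt K = subopt k" using subopt_null Suc by simp
    then show False using above success Suc by force
  qed
  have pos: "0 < prox_gap d" if "d \<le> k" for d
  proof (rule prox_gap_pos)
    have "\<epsilon> < subopt d" using above that Suc by simp
    then show "0 < subopt d" using eps_pos by linarith
  qed
  have "null_rate * card {d. d < K \<and> \<not> descent d} = null_rate * card {d. d < k \<and> \<not> descent d}"
    using \<open>descent k\<close> Suc by (simp add: card_less_Suc_conj)
  also have "\<dots> \<le> (\<Sum>d | d < k \<and> descent d. 1 / prox_gap d) + 1 / prox_gap k"
    by (rule card_null_steps_le) (rule pos)
  also have "\<dots> = (\<Sum>d | d < K \<and> descent d. 1 / prox_gap d)"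
    using \<open>descent k\<close> Suc by (simp add: sum_less_Suc_conj)
  also have "\<dots> \<le> 4 / (\<beta> * (\<rho> * D2)) + 4 * \<rho>\<^sup>2 * D2\<^sup>2 / (\<beta> * \<epsilon> ^ 3)"
    by (rule sum_inverse_prox_gap_descents_le[OF above])
  finally have "real (card {d. d < K \<and> \<not> descent d})
      \<le> (4 / (\<beta> * (\<rho> * D2)) + 4 * \<rho>\<^sup>2 * D2\<^sup>2 / (\<beta> * \<epsilon> ^ 3)) / null_rate"
    using null_rate_pos by (simp add: pos_le_divide_eq mult.commute)
  also have "\<dots> = 32 * \<rho> * M\<^sup>2 * D2\<^sup>2 / (\<beta> * (1 - \<beta>)\<^sup>2 * \<epsilon> ^ 3)
      + 32 * M\<^sup>2 / (\<beta> * (1 - \<beta>)\<^sup>2 * \<rho>\<^sup>2 * D2)"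
    by (rule descent_sum_bound_div_null_rate)
  also have "\<dots> \<le> 48 * \<rho> * M\<^sup>2 * D2\<^sup>2 / (\<beta> * (1 - \<beta>)\<^sup>2 * \<epsilon> ^ 3)
      + 32 * M\<^sup>2 / (\<beta> * (1 - \<beta>)\<^sup>2 * \<rho>\<^sup>2 * D2)"
    using rho beta D2_pos eps_pos by (intro add_right_mono divide_right_mono mult_right_mono) auto
  finally show ?thesis .
qed

lemma prox_gap_ge_min:
  assumes "\<epsilon> < subopt k"
  shows "min (\<epsilon> / 2) (\<epsilon>\<^sup>2 / (2 * \<rho> * D2)) \<le> prox_gap k"
proof (cases "\<rho> * D2 \<le> subopt k")
  case True
  then show ?thesis using prox_gap_ge_half[OF True] assms by linarith
next
  case False
  have "\<epsilon>\<^sup>2 / (2 * \<rho> * D2) \<le> (subopt k)\<^sup>2 / (2 * \<rho> * D2)"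
    using assms eps_pos rho D2_pos by (intro divide_right_mono power_mono) auto
  then show ?thesis using prox_gap_ge_square[of k] assms eps_pos False by force
qed

lemma exists_eps_solution: "\<exists>K. subopt K \<le> \<epsilon>"
proof (rule ccontr)
  assume "\<nexists>K. subopt K \<le> \<epsilon>"
  then have above: "\<epsilon> < subopt k" for k by (simp add: not_le)
  define m where "m = min (\<epsilon> / 2) (\<epsilon>\<^sup>2 / (2 * \<rho> * D2))"
  have "0 < m" unfolding m_def using eps_pos rho D2_pos by simp
  define S where "S = 4 / (\<beta> * (\<rho> * D2)) + 4 * \<rho>\<^sup>2 * D2\<^sup>2 / (\<beta> * \<epsilon> ^ 3)"
  define B where "B = 2 * \<rho> * D2 / (\<beta> * \<epsilon>)
    + real_of_int (max \<lceil>2 * ln (subopt 0 / (\<rho> * D2)) / \<beta>\<rceil> 0) + (S + 1 / m) / null_rate"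
  have "real n \<le> B" for n
  proof -
    have all_above: "\<forall>d<n. \<epsilon> < subopt d" using above by simp
    have "1 / prox_gap n \<le> 1 / m"
      using frac_le[of 1 1 m "prox_gap n"] prox_gap_ge_min[OF above] \<open>0 < m\<close> unfolding m_def by simp
    then have "null_rate * card {d. d < n \<and> \<not> descent d} \<le> S + 1 / m"
      using card_null_steps_le[of n] sum_inverse_prox_gap_descents_le[OF all_above]
        prox_gap_pos above eps_pos unfolding S_def by (smt (verit) less_trans)
    then have "real (card {d. d < n \<and> \<not> descent d}) \<le> (S + 1 / m) / null_rate"
      using null_rate_pos by (simp add: pos_le_divide_eq mult.commute)
    moreover have "real n = real (card {d. d < n \<and> descent d}) + real (card {d. d < n \<and> \<not> descent d})"
      using card_marked_plus_unmarked[of n descent] by simp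
    ultimately show ?thesis using card_descents_le[OF all_above] unfolding B_def by linarith
  qed
  from this[of "nat \<lceil>B\<rceil> + 1"] show False by linarith
qed

end

theorem theorem1:
  fixes f :: "'a::euclidean_space \<Rightarrow> real" and g :: "'a \<Rightarrow> 'a"
    and x z :: "nat \<Rightarrow> 'a" and fm :: "nat \<Rightarrow> 'a \<Rightarrow> real"
    and \<beta> \<rho> M D2 \<epsilon> :: real
  assumes convex: "convex_on UNIV f"
    and lip: "\<forall>u v. \<bar>f u - f v\<bar> \<le> M * norm (u - v)"
    and attained: "Xstar f \<noteq> {}"
    and subgr: "\<forall>u. g u \<in> subdiff f u"
    and beta: "0 < \<beta>" "\<beta> < 1"
    and rho: "\<rho> > 0"
    and run: "pbm_run f g \<beta> (\<lambda>k. \<rho>) x z fm"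
    and bdd: "bdd_above (range (\<lambda>k. (infdist (x k) (Xstar f))\<^sup>2))"
    and D2_def: "D2 = (SUP k. (infdist (x k) (Xstar f))\<^sup>2)"
    and D2_pos: "0 < D2"
    and eps: "0 < \<epsilon>" "\<epsilon> \<le> f (x 0) - fstar f"
  shows "\<exists>K. f (x K) - fstar f \<le> \<epsilon> \<and> (\<forall>k<K. f (x k) - fstar f > \<epsilon>) \<and>
     real (card {k. k < K \<and> is_descent f \<beta> fm x z k})
       \<le> 2 * \<rho> * D2 / (\<beta> * \<epsilon>)
          + real_of_int (max \<lceil>2 * ln ((f (x 0) - fstar f) / (\<rho> * D2)) / \<beta>\<rceil> 0) \<and>
     real (card {k. k < K \<and> \<not> is_descent f \<beta> fm x z k})
       \<le> 48 * \<rho> * M\<^sup>2 * D2\<^sup>2 / (\<beta> * (1 - \<beta>)\<^sup>2 * \<epsilon> ^ 3)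
          + 32 * M\<^sup>2 / (\<beta> * (1 - \<beta>)\<^sup>2 * \<rho>\<^sup>2 * D2)"
proof -
  obtain y where "y \<in> Xstar f" using attained by blast
  then have "f (x 0) \<noteq> f y" using eps unfolding Xstar_def by auto
  then have "0 < M" by (rule lipschitz_const_pos[OF lip])
  then interpret pbm_complexity f g x z fm \<beta> \<rho> M D2 \<epsilon>
    using assms by unfold_locales auto
  define K where "K = (LEAST K. subopt K \<le> \<epsilon>)"
  have success: "subopt K \<le> \<epsilon>"
    unfolding K_def by (rule LeastI_ex[OF exists_eps_solution])
  have above: "\<forall>k<K. \<epsilon> < subopt k"
    unfolding K_def using not_less_Least by force
  show ?thesis
    using success above card_descents_le[OF above] card_null_steps_before_eps_solution[OF above success]
    unfolding subopt_def by blast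
qed

end
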